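(* Let $G'=(V',E')$ be a graph and let $G=(V,E)$ be a vertex-induced subgraph of $G'$ such that: (i) every $v\in V'\setminus V$ has $\deg(v)<n$ in $G'$; (ii) $\operatorname{col}_{ve}(G)=n$; and (iii) in the vertex-edge marking game on $G$, Alice has a strategy which, at the end of each of her turns, leaves no unmarked vertex incident to $n-1$ marked edges. Then $\operatorname{col}_{ve}(G')=n$.
   Context: The vertex-edge marking game on a graph $G=(V,E)$ (finite or infinite) is played by Alice, who marks vertices, and Bob, who marks edges. Initially nothing is marked. The game proceeds in rounds $r=1,2,\dots$; in each round Alice first marks one unmarked vertex, then Bob marks one unmarked edge. For a finite graph the game ends when either player has no move; for an infinite graph it continues forever. After round $r$, the vertex score of $v$ is $0$ if $v$ is marked, and otherwise the number of marked edges incident to $v$. The $r$-round score is the supremum over $v\in V$ of the vertex scores after round $r$, and the final score of the game is the supremum of the $r$-round scores over all rounds. Bob has a winning strategy for score $s$ if, whatever Alice plays, Bob can force the final score to be at least $s$. The vertex-edge coloring number is $\operatorname{col}_{ve}(G)=\sup\{s : \text{Bob has a winning strategy for score } s\}+1$. *)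

theory Defs
  imports Main "HOL-Library.Extended_Nat"
begin

definition graph :: "'a set \<Rightarrow> 'a set set \<Rightarrow> bool" where
  "graph V E \<longleftrightarrow> (\<forall>e\<in>E. \<exists>u w. u \<noteq> w \<and> u \<in> V \<and> w \<in> V \<and> e = {u, w})"

definition induced_subgraph :: "'a set \<Rightarrow> 'a set set \<Rightarrow> 'a set \<Rightarrow> 'a set set \<Rightarrow> bool" where
  "induced_subgraph V E V' E' \<longleftrightarrow> V \<subseteq> V' \<and> E = {e \<in> E'. e \<subseteq> V}"

definition degree :: "'a set set \<Rightarrow> 'a \<Rightarrow> enat" where
  "degree E v = (if finite {e \<in> E. v \<in> e} then enat (card {e \<in> E. v \<in> e}) else \<infinity>)"

(* A history of the game: list of moves, Inl v = Alice marks vertex v,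
   Inr e = Bob marks edge e. *)
type_synonym 'a hist = "('a + 'a set) list"

definition MV :: "'a hist \<Rightarrow> 'a set" where
  "MV h = {v. Inl v \<in> set h}"

definition ME :: "'a hist \<Rightarrow> 'a set set" where
  "ME h = {e. Inr e \<in> set h}"

definition vscore :: "'a hist \<Rightarrow> 'a \<Rightarrow> nat" where
  "vscore h v = (if v \<in> MV h then 0 else card {e \<in> ME h. v \<in> e})"

definition pscore :: "'a set \<Rightarrow> 'a hist \<Rightarrow> enat" where
  "pscore V h = (SUP v\<in>V. enat (vscore h v))"

definition alice_strategy :: "'a set \<Rightarrow> ('a hist \<Rightarrow> 'a) \<Rightarrow> bool" where
  "alice_strategy V \<sigma> \<longleftrightarrow> (\<forall>h. V - MV h \<noteq> {} \<longrightarrow> \<sigma> h \<in> V - MV h)"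

definition bob_strategy :: "'a set set \<Rightarrow> ('a hist \<Rightarrow> 'a set) \<Rightarrow> bool" where
  "bob_strategy E \<tau> \<longleftrightarrow> (\<forall>h. E - ME h \<noteq> {} \<longrightarrow> \<tau> h \<in> E - ME h)"

(* the game has ended in position h: the player to move has no legal move
   (Alice moves when the history has even length, Bob when odd) *)
definition ended :: "'a set \<Rightarrow> 'a set set \<Rightarrow> 'a hist \<Rightarrow> bool" where
  "ended V E h \<longleftrightarrow> (if even (length h) then V - MV h = {} else E - ME h = {})"

primrec play :: "'a set \<Rightarrow> 'a set set \<Rightarrow> ('a hist \<Rightarrow> 'a) \<Rightarrow> ('a hist \<Rightarrow> 'a set) \<Rightarrow> nat \<Rightarrow> 'a hist" where
  "play V E \<sigma> \<tau> 0 = []"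
| "play V E \<sigma> \<tau> (Suc t) =
     (let h = play V E \<sigma> \<tau> t in
      if ended V E h then h
      else h @ [if even (length h) then Inl (\<sigma> h) else Inr (\<tau> h)])"

(* final score: supremum over rounds r of the r-round score, the position
   after round r being the position after 2r half-moves *)
definition final_score :: "'a set \<Rightarrow> 'a set set \<Rightarrow> ('a hist \<Rightarrow> 'a) \<Rightarrow> ('a hist \<Rightarrow> 'a set) \<Rightarrow> enat" where
  "final_score V E \<sigma> \<tau> = (SUP r. pscore V (play V E \<sigma> \<tau> (2 * r)))"

definition bob_wins :: "'a set \<Rightarrow> 'a set set \<Rightarrow> nat \<Rightarrow> bool" where
  "bob_wins V E s \<longleftrightarrow> (\<exists>\<tau>. bob_strategy E \<tau> \<and>
      (\<forall>\<sigma>. alice_strategy V \<sigma> \<longrightarrow> enat s \<le> final_score V E \<sigma> \<tau>))"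

definition col_ve :: "'a set \<Rightarrow> 'a set set \<Rightarrow> enat" where
  "col_ve V E = Sup {enat s | s. bob_wins V E s} + 1"

(* Alice has a strategy which, at the end of each of her turns, leaves no unmarked
   vertex incident to k marked edges (positions right after Alice's moves are those
   of odd length) *)
definition alice_avoids :: "'a set \<Rightarrow> 'a set set \<Rightarrow> nat \<Rightarrow> bool" where
  "alice_avoids V E k \<longleftrightarrow> (\<exists>\<sigma>. alice_strategy V \<sigma> \<and>
     (\<forall>\<tau>. bob_strategy E \<tau> \<longrightarrow> (\<forall>t. odd (length (play V E \<sigma> \<tau> t)) \<longrightarrow>
        (\<forall>v \<in> V - MV (play V E \<sigma> \<tau> t).
            card {e \<in> ME (play V E \<sigma> \<tau> t). v \<in> e} \<noteq> k))))"

end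

theory Submission
  imports Defs "HOL-Library.Sublist"
begin

text \<open>
  Bob's winning scores survive passing to a supergraph: Bob plays his strategy for \<open>G\<close> in the
  shadow game on \<open>G\<close> that copies his own moves and turns each move of Alice into some legal
  vertex move of \<open>G\<close>. While the shadow game runs, it has the same marked edges as the real
  game and at least the same marked vertices of \<open>V\<close>, so every score it reaches is reached in
  \<open>G'\<close>; hence \<open>col_ve G' \<ge> n\<close>.

  Conversely, Alice plays her strategy for \<open>G\<close> in the shadow game formed by Bob's moves inside
  \<open>E\<close>. An edge of \<open>E'\<close> outside \<open>E\<close> has an endpoint outside \<open>V\<close>, so such a move of Bob
  exposes at most one unmarked vertex of \<open>V\<close> to an edge unseen by the shadow game, and Alice
  marks it immediately. Vertices outside \<open>V\<close> have degree below \<open>n\<close>, and an unmarked vertex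
  of \<open>V\<close> has at most \<open>n - 2\<close> marked edges after each move of Alice, so the score never
  reaches \<open>n\<close>.
\<close>

lemma MV_simps [simp]:
  "MV [] = {}" "MV (h @ [Inl v]) = insert v (MV h)" "MV (h @ [Inr e]) = MV h"
  by (auto simp: MV_def)

lemma ME_simps [simp]:
  "ME [] = {}" "ME (h @ [Inr e]) = insert e (ME h)" "ME (h @ [Inl v]) = ME h"
  by (auto simp: ME_def)

lemma finite_ME [simp]: "finite (ME h)"
proof -
  have "ME h = Inr -` set h" by (auto simp: ME_def)
  then show ?thesis by (simp add: finite_vimageI)
qed

lemma vscore_snoc_Inl_le: "vscore (h @ [Inl x]) v \<le> vscore h v"
  unfolding vscore_def by auto

lemma vscore_le_snoc_Inr: "vscore h v \<le> vscore (h @ [Inr e]) v"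
  unfolding vscore_def by (auto intro!: card_mono)

lemma vscore_snoc_Inr_le_Suc: "vscore (h @ [Inr e]) v \<le> Suc (vscore h v)"
proof -
  have "{e' \<in> insert e (ME h). v \<in> e'} \<subseteq> insert e {e' \<in> ME h. v \<in> e'}" by auto
  then have "card {e' \<in> insert e (ME h). v \<in> e'} \<le> card (insert e {e' \<in> ME h. v \<in> e'})"
    by (intro card_mono) auto
  also have "\<dots> \<le> Suc (card {e' \<in> ME h. v \<in> e'})" by (simp add: card_insert_if)
  finally show ?thesis unfolding vscore_def by auto
qed

lemma play_Suc_cases:
  "play V E \<sigma> \<tau> (Suc t) = play V E \<sigma> \<tau> t \<or>
   \<not> ended V E (play V E \<sigma> \<tau> t) \<and> play V E \<sigma> \<tau> (Suc t) = play V E \<sigma> \<tau> t @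
     [if even (length (play V E \<sigma> \<tau> t)) then Inl (\<sigma> (play V E \<sigma> \<tau> t))
      else Inr (\<tau> (play V E \<sigma> \<tau> t))]"
  by (simp add: Let_def)

lemma play_Suc_ended: "ended V E (play V E \<sigma> \<tau> t) \<Longrightarrow> play V E \<sigma> \<tau> (Suc t) = play V E \<sigma> \<tau> t"
  by (simp add: Let_def)

lemma play_Suc_not_ended:
  "\<not> ended V E (play V E \<sigma> \<tau> t) \<Longrightarrow> play V E \<sigma> \<tau> (Suc t) = play V E \<sigma> \<tau> t @
     [if even (length (play V E \<sigma> \<tau> t)) then Inl (\<sigma> (play V E \<sigma> \<tau> t))
      else Inr (\<tau> (play V E \<sigma> \<tau> t))]"
  by (simp add: Let_def)

lemma length_play: "length (play V E \<sigma> \<tau> t) = t \<or> ended V E (play V E \<sigma> \<tau> t)"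
  by (induction t) (auto simp: Let_def)

lemma ME_play_subset: "bob_strategy E \<tau> \<Longrightarrow> ME (play V E \<sigma> \<tau> t) \<subseteq> E"
  by (induction t) (auto simp: Let_def ended_def bob_strategy_def)

lemma pscore_play_le_final_score: "pscore V (play V E \<sigma> \<tau> t) \<le> final_score V E \<sigma> \<tau>"
proof -
  have "pscore V (play V E \<sigma> \<tau> t) \<le> pscore V (play V E \<sigma> \<tau> (2 * (Suc t div 2)))"
  proof (cases "even t")
    case False
    then have "Suc t = 2 * (Suc t div 2)" by simp
    moreover have "pscore V (play V E \<sigma> \<tau> t) \<le> pscore V (play V E \<sigma> \<tau> (Suc t))"
      using play_Suc_cases[of V E \<sigma> \<tau> t] length_play[of V E \<sigma> \<tau> t] False
      unfolding pscore_def
      by (auto intro!: SUP_mono' simp: vscore_le_snoc_Inr)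
    ultimately show ?thesis by metis
  qed simp
  also have "\<dots> \<le> final_score V E \<sigma> \<tau>"
    unfolding final_score_def by (rule SUP_upper) simp
  finally show ?thesis .
qed

lemma final_score_le:
  assumes "\<And>t v. v \<in> V \<Longrightarrow> vscore (play V E \<sigma> \<tau> t) v \<le> k"
  shows "final_score V E \<sigma> \<tau> \<le> enat k"
  unfolding final_score_def pscore_def by (intro SUP_least) (simp add: assms)

lemma enat_le_SUP_iff:
  fixes f :: "'b \<Rightarrow> enat"
  assumes "0 < s"
  shows "enat s \<le> (SUP x\<in>A. f x) \<longleftrightarrow> (\<exists>x\<in>A. enat s \<le> f x)"
proof -
  have "\<And>y. enat s \<le> y \<longleftrightarrow> enat (s - 1) < y"
    using assms Suc_ile_eq[of "s - 1"] by simp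
  then show ?thesis by (simp add: less_SUP_iff)
qed

inductive legal :: "'a set \<Rightarrow> 'a set set \<Rightarrow> 'a hist \<Rightarrow> bool" for V E where
  legal_Nil: "legal V E []"
| legal_snoc_Inl: "legal V E J \<Longrightarrow> even (length J) \<Longrightarrow> v \<in> V - MV J \<Longrightarrow> legal V E (J @ [Inl v])"
| legal_snoc_Inr: "legal V E J \<Longrightarrow> odd (length J) \<Longrightarrow> e \<in> E - ME J \<Longrightarrow> legal V E (J @ [Inr e])"

lemma legal_snoc_iff:
  "legal V E (J @ [m]) \<longleftrightarrow> legal V E J \<and>
     (case m of Inl v \<Rightarrow> even (length J) \<and> v \<in> V - MV J
              | Inr e \<Rightarrow> odd (length J) \<and> e \<in> E - ME J)"
proof
  assume "legal V E (J @ [m])"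
  then show "legal V E J \<and> (case m of Inl v \<Rightarrow> even (length J) \<and> v \<in> V - MV J
              | Inr e \<Rightarrow> odd (length J) \<and> e \<in> E - ME J)"
    by (cases rule: legal.cases) auto
qed (auto intro: legal.intros split: sum.splits)

lemma legal_prefix: "legal V E J \<Longrightarrow> prefix K J \<Longrightarrow> legal V E K"
  by (induction J rule: rev_induct) (auto simp: legal_snoc_iff)

definition alice_follows :: "('a hist \<Rightarrow> 'a) \<Rightarrow> 'a hist \<Rightarrow> bool" where
  "alice_follows \<sigma> J \<longleftrightarrow> (\<forall>K v. prefix (K @ [Inl v]) J \<longrightarrow> \<sigma> K = v)"

definition bob_follows :: "('a hist \<Rightarrow> 'a set) \<Rightarrow> 'a hist \<Rightarrow> bool" where
  "bob_follows \<tau> J \<longleftrightarrow> (\<forall>K e. prefix (K @ [Inr e]) J \<longrightarrow> \<tau> K = e)"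

lemma alice_follows_prefix: "alice_follows \<sigma> J \<Longrightarrow> prefix K J \<Longrightarrow> alice_follows \<sigma> K"
  unfolding alice_follows_def by (meson prefix_order.trans)

lemma bob_follows_prefix: "bob_follows \<tau> J \<Longrightarrow> prefix K J \<Longrightarrow> bob_follows \<tau> K"
  unfolding bob_follows_def by (meson prefix_order.trans)

lemma alice_follows_snoc_iff:
  "alice_follows \<sigma> (J @ [m]) \<longleftrightarrow> alice_follows \<sigma> J \<and> (\<forall>v. m = Inl v \<longrightarrow> \<sigma> J = v)"
  unfolding alice_follows_def by auto

lemma bob_follows_snoc_iff:
  "bob_follows \<tau> (J @ [m]) \<longleftrightarrow> bob_follows \<tau> J \<and> (\<forall>e. m = Inr e \<longrightarrow> \<tau> J = e)"
  unfolding bob_follows_def by auto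

lemma play_eq_history:
  "legal V E J \<Longrightarrow> alice_follows \<sigma> J \<Longrightarrow> bob_follows \<tau> J \<Longrightarrow> play V E \<sigma> \<tau> (length J) = J"
proof (induction J rule: rev_induct)
  case (snoc m J)
  then have "play V E \<sigma> \<tau> (length J) = J" and "\<not> ended V E J"
    by (auto simp: legal_snoc_iff alice_follows_snoc_iff bob_follows_snoc_iff ended_def
        split: sum.splits)
  with snoc.prems show ?case
    by (cases m) (auto simp: Let_def legal_snoc_iff alice_follows_snoc_iff bob_follows_snoc_iff)
qed simp

lemma prefix_chain_mono:
  assumes "\<And>t. prefix (Q t) (Q (Suc t))" and "t \<le> t'"
  shows "prefix (Q t) (Q t')"
  using assms(2) by (induction t' rule: dec_induct) (auto intro: prefix_order.trans assms(1))

lemma prefix_chain_next_unique: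
  assumes chain: "\<And>t. prefix (Q t) (Q (Suc t))"
    and "prefix (J @ [m]) (Q t)" and "prefix (J @ [m']) (Q t')"
  shows "m = m'"
proof -
  have "prefix (Q t) (Q t') \<or> prefix (Q t') (Q t)"
    using prefix_chain_mono[of Q, OF chain] nat_le_linear by blast
  then have "prefix (J @ [m]) (J @ [m']) \<or> prefix (J @ [m']) (J @ [m])"
    using assms(2,3) prefix_same_cases prefix_order.trans by metis
  then show ?thesis by auto
qed

lemma chain_alice_strategy:
  assumes chain: "\<And>t. prefix (Q t) (Q (Suc t))" and legal: "\<And>t. legal V E (Q t)"
  obtains \<sigma> where "alice_strategy V \<sigma>" and "\<And>t. alice_follows \<sigma> (Q t)"
proof
  define \<sigma> where "\<sigma> J = (if \<exists>v t. prefix (J @ [Inl v]) (Q t)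
    then THE v. \<exists>t. prefix (J @ [Inl v]) (Q t) else SOME v. v \<in> V - MV J)" for J
  have next_move: "\<sigma> J = v" if "prefix (J @ [Inl v]) (Q t)" for J v t
  proof -
    have "\<exists>!v. \<exists>t. prefix (J @ [Inl v]) (Q t)"
      using that prefix_chain_next_unique[of Q, OF chain] by blast
    then have "(THE v. \<exists>t. prefix (J @ [Inl v]) (Q t)) = v"
      by (rule the1_equality) (use that in blast)
    with that show ?thesis unfolding \<sigma>_def by auto
  qed
  show "alice_strategy V \<sigma>"
    unfolding alice_strategy_def
  proof (intro allI impI)
    fix J assume unmarked: "V - MV J \<noteq> {}"
    show "\<sigma> J \<in> V - MV J"
    proof (cases "\<exists>v t. prefix (J @ [Inl v]) (Q t)")
      case True
      then obtain v t where "prefix (J @ [Inl v]) (Q t)" by blast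
      then have "\<sigma> J = v" and "legal V E (J @ [Inl v])"
        using next_move legal_prefix[OF legal] by blast+
      then show ?thesis by (simp add: legal_snoc_iff)
    next
      case False
      then have "\<sigma> J = (SOME v. v \<in> V - MV J)" by (simp add: \<sigma>_def)
      then show ?thesis using unmarked by (metis some_in_eq)
    qed
  qed
  show "alice_follows \<sigma> (Q t)" for t
    unfolding alice_follows_def using next_move by blast
qed

lemma chain_bob_strategy:
  assumes chain: "\<And>t. prefix (Q t) (Q (Suc t))" and legal: "\<And>t. legal V E (Q t)"
  obtains \<tau> where "bob_strategy E \<tau>" and "\<And>t. bob_follows \<tau> (Q t)"
proof
  define \<tau> where "\<tau> J = (if \<exists>e t. prefix (J @ [Inr e]) (Q t)
    then THE e. \<exists>t. prefix (J @ [Inr e]) (Q t) else SOME e. e \<in> E - ME J)" for J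
  have next_move: "\<tau> J = e" if "prefix (J @ [Inr e]) (Q t)" for J e t
  proof -
    have "\<exists>!e. \<exists>t. prefix (J @ [Inr e]) (Q t)"
      using that prefix_chain_next_unique[of Q, OF chain] by blast
    then have "(THE e. \<exists>t. prefix (J @ [Inr e]) (Q t)) = e"
      by (rule the1_equality) (use that in blast)
    with that show ?thesis unfolding \<tau>_def by auto
  qed
  show "bob_strategy E \<tau>"
    unfolding bob_strategy_def
  proof (intro allI impI)
    fix J assume unmarked: "E - ME J \<noteq> {}"
    show "\<tau> J \<in> E - ME J"
    proof (cases "\<exists>e t. prefix (J @ [Inr e]) (Q t)")
      case True
      then obtain e t where "prefix (J @ [Inr e]) (Q t)" by blast
      then have "\<tau> J = e" and "legal V E (J @ [Inr e])"
        using next_move legal_prefix[OF legal] by blast+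
      then show ?thesis by (simp add: legal_snoc_iff)
    next
      case False
      then have "\<tau> J = (SOME e. e \<in> E - ME J)" by (simp add: \<tau>_def)
      then show ?thesis using unmarked by (metis some_in_eq)
    qed
  qed
  show "bob_follows \<tau> (Q t)" for t
    unfolding bob_follows_def using next_move by blast
qed

lemma play_in_chain:
  assumes "Q 0 = []"
    and legal: "\<And>t. legal V E (Q t)"
    and follows: "\<And>t. alice_follows \<sigma> (Q t)" "\<And>t. bob_follows \<tau> (Q t)"
    and progress: "\<And>t. \<not> ended V E (Q t) \<Longrightarrow> \<exists>m. Q (Suc t) = Q t @ [m]"
  shows "\<exists>t. play V E \<sigma> \<tau> s = Q t"
proof (induction s)
  case 0
  show ?case using \<open>Q 0 = []\<close> by (metis play.simps(1))
next
  case (Suc s)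
  then obtain t where t: "play V E \<sigma> \<tau> s = Q t" by blast
  show ?case
  proof (cases "ended V E (Q t)")
    case True
    then show ?thesis using t play_Suc_ended by metis
  next
    case False
    then obtain m where m: "Q (Suc t) = Q t @ [m]" using progress by blast
    have "length (Q t) = s" using length_play[of V E \<sigma> \<tau> s] t False by auto
    then have "play V E \<sigma> \<tau> (Suc s) = play V E \<sigma> \<tau> (length (Q (Suc t)))" using m by simp
    also have "\<dots> = Q (Suc t)" using play_eq_history legal follows by blast
    finally show ?thesis by blast
  qed
qed

lemma bob_wins_0: "bob_wins V E 0"
proof -
  define \<tau> where "\<tau> h = (SOME e. e \<in> E - ME h)" for h :: "'a hist"
  have "bob_strategy E \<tau>"
    unfolding bob_strategy_def \<tau>_def by (metis some_in_eq)
  then show ?thesis unfolding bob_wins_def by (auto simp: zero_enat_def[symmetric])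
qed

lemma bob_wins_le: "bob_wins V E s \<Longrightarrow> s' \<le> s \<Longrightarrow> bob_wins V E s'"
  unfolding bob_wins_def by (meson enat_ord_simps(1) order_trans)

lemma col_ve_eq_enat_iff:
  "col_ve V E = enat n \<longleftrightarrow> 0 < n \<and> bob_wins V E (n - 1) \<and> \<not> bob_wins V E n"
proof -
  define S where "S = {enat s | s. bob_wins V E s}"
  have col: "col_ve V E = Sup S + 1" unfolding col_ve_def S_def ..
  have Sup_eq: "Sup S = enat m" if "bob_wins V E m" "\<not> bob_wins V E (Suc m)" for m
  proof (rule antisym)
    show "Sup S \<le> enat m"
      using that bob_wins_le[of V E _ "Suc m"] by (auto simp: S_def intro!: Sup_least) (meson not_less_eq_eq)
    show "enat m \<le> Sup S" using that by (auto simp: S_def intro!: Sup_upper)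
  qed
  show ?thesis
  proof
    assume "col_ve V E = enat n"
    then obtain m where m: "Sup S = enat m" and n: "n = Suc m"
      unfolding col by (cases "Sup S") (auto simp: one_enat_def)
    have "S \<noteq> {}" using bob_wins_0 by (auto simp: S_def)
    then have "finite S" and "Max S = enat m" using m by (auto simp: Sup_enat_def split: if_splits)
    then have "enat m \<in> S" using Max_in \<open>S \<noteq> {}\<close> by metis
    then have "bob_wins V E m" by (auto simp: S_def)
    moreover have "\<not> bob_wins V E (Suc m)"
      using Sup_upper[of "enat (Suc m)" S] m by (auto simp: S_def)
    ultimately show "0 < n \<and> bob_wins V E (n - 1) \<and> \<not> bob_wins V E n" using n by simp
  next
    assume "0 < n \<and> bob_wins V E (n - 1) \<and> \<not> bob_wins V E n"
    then show "col_ve V E = enat n"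
      using Sup_eq[of "n - 1"] by (simp add: col one_enat_def)
  qed
qed

section \<open>Shadow games on a subgraph\<close>

definition sim_step ::
  "'a set \<Rightarrow> 'a set set \<Rightarrow> ('a hist \<Rightarrow> 'a \<Rightarrow> 'a) \<Rightarrow> 'a hist \<Rightarrow> 'a + 'a set \<Rightarrow> 'a hist" where
  "sim_step V E f I m = (case m of
      Inl x \<Rightarrow> if even (length I) \<and> V - MV I \<noteq> {} then I @ [Inl (f I x)] else I
    | Inr e \<Rightarrow> if odd (length I) \<and> e \<in> E - ME I then I @ [Inr e] else I)"

definition sim :: "'a set \<Rightarrow> 'a set set \<Rightarrow> ('a hist \<Rightarrow> 'a \<Rightarrow> 'a) \<Rightarrow> 'a hist \<Rightarrow> 'a hist" where
  "sim V E f h = foldl (sim_step V E f) [] h"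

lemma sim_Nil [simp]: "sim V E f [] = []"
  by (simp add: sim_def)

lemma sim_snoc [simp]: "sim V E f (h @ [m]) = sim_step V E f (sim V E f h) m"
  by (simp add: sim_def)

lemma sim_step_cases: "sim_step V E f I m = I \<or> (\<exists>m'. sim_step V E f I m = I @ [m'])"
  unfolding sim_step_def by (auto split: sum.split)

lemma sim_step_ended: "ended V E I \<Longrightarrow> sim_step V E f I m = I"
  unfolding sim_step_def ended_def by (auto split: sum.split)

lemma prefix_sim_play_Suc:
  "prefix (sim V E f (play V' E' \<sigma> \<tau> t)) (sim V E f (play V' E' \<sigma> \<tau> (Suc t)))"
proof -
  consider "play V' E' \<sigma> \<tau> (Suc t) = play V' E' \<sigma> \<tau> t"
    | m where "play V' E' \<sigma> \<tau> (Suc t) = play V' E' \<sigma> \<tau> t @ [m]"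
    using play_Suc_cases[of V' E' \<sigma> \<tau> t] by blast
  then show ?thesis
  proof cases
    case (2 m)
    then show ?thesis using sim_step_cases[of V E f _ m] by (metis prefix_order.refl prefix_snoc sim_snoc)
  qed simp
qed

section \<open>Bob on a supergraph\<close>

definition legal_vertex :: "'a set \<Rightarrow> 'a hist \<Rightarrow> 'a \<Rightarrow> 'a" where
  "legal_vertex V I x = (if x \<in> V - MV I then x else SOME v. v \<in> V - MV I)"

definition bob_lift ::
  "'a set \<Rightarrow> 'a set set \<Rightarrow> 'a set set \<Rightarrow> ('a hist \<Rightarrow> 'a set) \<Rightarrow> 'a hist \<Rightarrow> 'a set" where
  "bob_lift V E E' \<tau> h = (let I = sim V E (legal_vertex V) h in
     if odd (length I) \<and> E - ME I \<noteq> {} \<and> \<tau> I \<notin> ME h then \<tau> I else SOME e. e \<in> E' - ME h)"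

locale bob_lifting =
  fixes V V' :: "'a set" and E E' :: "'a set set" and \<tau> :: "'a hist \<Rightarrow> 'a set"
  assumes V_subset: "V \<subseteq> V'" and E_subset: "E \<subseteq> E'" and bob: "bob_strategy E \<tau>"
begin

abbreviation shadow :: "'a hist \<Rightarrow> 'a hist" where
  "shadow \<equiv> sim V E (legal_vertex V)"

abbreviation \<tau>' :: "'a hist \<Rightarrow> 'a set" where
  "\<tau>' \<equiv> bob_lift V E E' \<tau>"

lemma bob_lift_strategy: "bob_strategy E' \<tau>'"
  unfolding bob_strategy_def
proof (intro allI impI)
  fix h assume unmarked: "E' - ME h \<noteq> {}"
  define I where "I = shadow h"
  show "\<tau>' h \<in> E' - ME h"
  proof (cases "odd (length I) \<and> E - ME I \<noteq> {} \<and> \<tau> I \<notin> ME h")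
    case True
    then have "\<tau> I \<in> E" using bob unfolding bob_strategy_def by blast
    then show ?thesis using True E_subset unfolding bob_lift_def I_def[symmetric] Let_def by auto
  next
    case False
    then have "\<tau>' h = (SOME e. e \<in> E' - ME h)" unfolding bob_lift_def I_def[symmetric] Let_def by auto
    then show ?thesis using unmarked by (metis some_in_eq)
  qed
qed

text \<open>The shadow game keeps pace with the real game until it ends. The last clause is stated
  for equal lengths rather than for running shadow games so that it also covers the position in
  which the shadow game ends.\<close>

definition tracks :: "'a hist \<Rightarrow> 'a hist \<Rightarrow> bool" where
  "tracks h I \<longleftrightarrow> legal V E I \<and> bob_follows \<tau> I \<and> length I \<le> length h
     \<and> (\<not> ended V E I \<longrightarrow> length I = length h)
     \<and> (length I = length h \<longrightarrow> ME I = ME h \<and> MV h \<inter> V \<subseteq> MV I)"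

lemma tracks_Nil: "tracks [] []"
  unfolding tracks_def bob_follows_def by (auto intro: legal_Nil)

lemma tracks_snoc_ended: "tracks h I \<Longrightarrow> ended V E I \<Longrightarrow> tracks (h @ [m]) I"
  unfolding tracks_def by auto

lemma not_ended_if_tracks: "tracks h I \<Longrightarrow> \<not> ended V E I \<Longrightarrow> \<not> ended V' E' h"
  unfolding tracks_def ended_def using V_subset E_subset by (auto split: if_splits)

lemma bob_lift_eq:
  assumes "tracks h I" "I = shadow h" "odd (length h)" "\<not> ended V E I"
  shows "\<tau>' h = \<tau> I" and "\<tau> I \<in> E - ME I"
proof -
  have "odd (length I)" "ME I = ME h" "E - ME I \<noteq> {}"
    using assms unfolding tracks_def ended_def by auto
  moreover from this show "\<tau> I \<in> E - ME I" using bob unfolding bob_strategy_def by blast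
  ultimately show "\<tau>' h = \<tau> I" using assms(2) by (simp add: bob_lift_def Let_def)
qed

lemma tracks_snoc_Inl:
  assumes "tracks h I" "even (length h)"
  shows "tracks (h @ [Inl x]) (sim_step V E (legal_vertex V) I (Inl x))"
proof (cases "ended V E I")
  case False
  define z where "z = legal_vertex V I x"
  from assms False have legal: "legal V E I" and follows: "bob_follows \<tau> I"
    and sync: "length I = length h" "ME I = ME h" "MV h \<inter> V \<subseteq> MV I"
    unfolding tracks_def by auto
  with assms False have "even (length I)" "V - MV I \<noteq> {}" unfolding ended_def by auto
  then have step: "sim_step V E (legal_vertex V) I (Inl x) = I @ [Inl z]"
    unfolding sim_step_def z_def by simp
  have "z \<in> V - MV I"
    using some_in_eq[of "V - MV I"] \<open>V - MV I \<noteq> {}\<close> unfolding z_def legal_vertex_def by auto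
  then have "legal V E (I @ [Inl z])" using legal \<open>even (length I)\<close> by (rule legal_snoc_Inl[rotated 2])
  moreover have "MV (h @ [Inl x]) \<inter> V \<subseteq> MV (I @ [Inl z])"
    using sync unfolding z_def legal_vertex_def by auto
  ultimately show ?thesis
    unfolding step tracks_def using follows sync by (simp add: bob_follows_snoc_iff)
qed (use assms(1) in \<open>simp add: sim_step_ended tracks_snoc_ended\<close>)

lemma tracks_snoc_Inr:
  assumes "tracks h I" "I = shadow h" "odd (length h)"
  shows "tracks (h @ [Inr (\<tau>' h)]) (sim_step V E (legal_vertex V) I (Inr (\<tau>' h)))"
proof (cases "ended V E I")
  case False
  from assms False have legal: "legal V E I" and follows: "bob_follows \<tau> I"
    and sync: "length I = length h" "ME I = ME h" "MV h \<inter> V \<subseteq> MV I"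
    unfolding tracks_def by auto
  have "\<tau>' h = \<tau> I" "\<tau> I \<in> E - ME I" using bob_lift_eq assms False by blast+
  moreover have "odd (length I)" using sync assms by simp
  ultimately have "sim_step V E (legal_vertex V) I (Inr (\<tau>' h)) = I @ [Inr (\<tau> I)]"
    and "legal V E (I @ [Inr (\<tau> I)])"
    using legal by (auto simp: sim_step_def intro: legal_snoc_Inr)
  then show ?thesis
    unfolding tracks_def using \<open>\<tau>' h = \<tau> I\<close> follows sync by (simp add: bob_follows_snoc_iff)
qed (use assms(1) in \<open>simp add: sim_step_ended tracks_snoc_ended\<close>)

context
  fixes \<sigma>' :: "'a hist \<Rightarrow> 'a"
begin

abbreviation real_play :: "nat \<Rightarrow> 'a hist" where
  "real_play t \<equiv> play V' E' \<sigma>' \<tau>' t"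

abbreviation shadow_play :: "nat \<Rightarrow> 'a hist" where
  "shadow_play t \<equiv> shadow (real_play t)"

lemma tracks_play: "tracks (real_play t) (shadow_play t)"
proof (induction t)
  case 0
  then show ?case by (simp add: tracks_Nil)
next
  case (Suc t)
  consider "real_play (Suc t) = real_play t"
    | "even (length (real_play t))" "real_play (Suc t) = real_play t @ [Inl (\<sigma>' (real_play t))]"
    | "odd (length (real_play t))" "real_play (Suc t) = real_play t @ [Inr (\<tau>' (real_play t))]"
    using play_Suc_cases[of V' E' \<sigma>' \<tau>' t] by (auto split: if_splits)
  then show ?case
    by cases (use Suc.IH tracks_snoc_Inl tracks_snoc_Inr in auto)
qed

lemma shadow_play_Suc:
  assumes "\<not> ended V E (shadow_play t)"
  shows "\<exists>m. shadow_play (Suc t) = shadow_play t @ [m]"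
proof -
  have tracks: "tracks (real_play t) (shadow_play t)" by (rule tracks_play)
  then have sync: "length (shadow_play t) = length (real_play t)"
    using assms unfolding tracks_def by auto
  have "\<not> ended V' E' (real_play t)" using not_ended_if_tracks tracks assms by blast
  then have next_move: "real_play (Suc t) = real_play t @
     [if even (length (real_play t)) then Inl (\<sigma>' (real_play t)) else Inr (\<tau>' (real_play t))]"
    by (rule play_Suc_not_ended)
  show ?thesis
  proof (cases "even (length (real_play t))")
    case True
    with assms sync show ?thesis using next_move by (auto simp: sim_step_def ended_def)
  next
    case False
    then have "\<tau>' (real_play t) = \<tau> (shadow_play t)" "\<tau> (shadow_play t) \<in> E - ME (shadow_play t)"
      using bob_lift_eq[OF tracks refl _ assms] by auto
    with False sync show ?thesis using next_move by (auto simp: sim_step_def)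
  qed
qed

lemma shadow_play_synced: "\<exists>t'. shadow_play t' = shadow_play t \<and> length (shadow_play t') = length (real_play t')"
proof (induction t)
  case 0
  show ?case by (intro exI[of _ 0]) simp
next
  case (Suc t)
  show ?case
  proof (cases "shadow_play (Suc t) = shadow_play t")
    case True
    then show ?thesis using Suc.IH by metis
  next
    case False
    then have "\<not> ended V E (shadow_play t)"
      using play_Suc_cases[of V' E' \<sigma>' \<tau>' t] sim_step_ended by fastforce
    then have "length (shadow_play t) = length (real_play t)"
      using tracks_play[of t] unfolding tracks_def by auto
    moreover obtain m where "shadow_play (Suc t) = shadow_play t @ [m]"
      using shadow_play_Suc \<open>\<not> ended V E (shadow_play t)\<close> by blast
    ultimately have "length (shadow_play (Suc t)) = length (real_play (Suc t))"
      using False play_Suc_cases[of V' E' \<sigma>' \<tau>' t] by auto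
    then show ?thesis by blast
  qed
qed

lemma final_score_bob_lift:
  assumes "0 < s" and wins: "\<And>\<sigma>. alice_strategy V \<sigma> \<Longrightarrow> enat s \<le> final_score V E \<sigma> \<tau>"
  shows "enat s \<le> final_score V' E' \<sigma>' \<tau>'"
proof -
  have chain: "\<And>t. prefix (shadow_play t) (shadow_play (Suc t))" by (rule prefix_sim_play_Suc)
  have legal: "\<And>t. legal V E (shadow_play t)" and bob_follows: "\<And>t. bob_follows \<tau> (shadow_play t)"
    using tracks_play unfolding tracks_def by auto
  obtain \<sigma> where alice: "alice_strategy V \<sigma>" and alice_follows: "\<And>t. alice_follows \<sigma> (shadow_play t)"
    using chain_alice_strategy[of shadow_play, OF chain legal] by blast
  obtain r where "enat s \<le> pscore V (play V E \<sigma> \<tau> (2 * r))"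
    using wins[OF alice] unfolding final_score_def by (auto simp: enat_le_SUP_iff[OF \<open>0 < s\<close>])
  moreover obtain t where "play V E \<sigma> \<tau> (2 * r) = shadow_play t"
    using play_in_chain[of shadow_play, OF _ legal alice_follows bob_follows shadow_play_Suc] by auto
  ultimately obtain v where v: "v \<in> V" "enat s \<le> vscore (shadow_play t) v"
    unfolding pscore_def by (auto simp: enat_le_SUP_iff[OF \<open>0 < s\<close>])
  obtain t' where t': "shadow_play t' = shadow_play t" "length (shadow_play t') = length (real_play t')"
    using shadow_play_synced by blast
  then have "ME (real_play t') = ME (shadow_play t)" "MV (real_play t') \<inter> V \<subseteq> MV (shadow_play t)"
    using tracks_play[of t'] unfolding tracks_def by auto
  moreover have "v \<notin> MV (shadow_play t)" using v \<open>0 < s\<close> unfolding vscore_def by auto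
  ultimately have "vscore (real_play t') v = vscore (shadow_play t) v"
    using v unfolding vscore_def by auto
  then have "enat s \<le> pscore V' (real_play t')"
    unfolding pscore_def using v V_subset by (intro SUP_upper2[of v]) auto
  also have "\<dots> \<le> final_score V' E' \<sigma>' \<tau>'" by (rule pscore_play_le_final_score)
  finally show ?thesis .
qed

end

end

lemma bob_wins_supergraph:
  assumes "V \<subseteq> V'" "E \<subseteq> E'" "bob_wins V E s"
  shows "bob_wins V' E' s"
proof (cases "s = 0")
  case False
  from assms(3) obtain \<tau> where bob: "bob_strategy E \<tau>"
    and wins: "\<And>\<sigma>. alice_strategy V \<sigma> \<Longrightarrow> enat s \<le> final_score V E \<sigma> \<tau>"
    unfolding bob_wins_def by blast
  interpret bob_lifting V V' E E' \<tau> using assms(1,2) bob by unfold_locales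
  show ?thesis
    unfolding bob_wins_def using bob_lift_strategy final_score_bob_lift False wins by blast
qed (simp add: bob_wins_0)

section \<open>Alice on an extension by vertices of small degree\<close>

definition avoids :: "'a set \<Rightarrow> nat \<Rightarrow> 'a hist \<Rightarrow> bool" where
  "avoids V k h \<longleftrightarrow> (\<forall>v \<in> V - MV h. card {e \<in> ME h. v \<in> e} \<noteq> k)"

lemma card_marked_if_avoids:
  assumes "legal V E J" and "\<And>K. prefix K J \<Longrightarrow> odd (length K) \<Longrightarrow> avoids V k K"
    and "v \<in> V - MV J"
  shows "if odd (length J) then card {e \<in> ME J. v \<in> e} < k else card {e \<in> ME J. v \<in> e} \<le> k"
  using assms
proof (induction J rule: rev_induct)
  case (snoc m J)
  have "v \<in> V - MV J" using snoc.prems(3) by (cases m) auto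
  with snoc have IH: "if odd (length J) then card {e \<in> ME J. v \<in> e} < k else card {e \<in> ME J. v \<in> e} \<le> k"
    by (simp add: legal_snoc_iff)
  show ?case
  proof (cases m)
    case (Inl x)
    with snoc.prems have "even (length J)" "avoids V k (J @ [m])"
      by (auto simp: legal_snoc_iff)
    moreover have "card {e \<in> ME J. v \<in> e} \<noteq> k"
      using \<open>avoids V k (J @ [m])\<close> snoc.prems(3) Inl unfolding avoids_def by auto
    ultimately show ?thesis using IH Inl by auto
  next
    case (Inr e)
    with snoc.prems have "odd (length J)" by (simp add: legal_snoc_iff)
    moreover have "vscore (J @ [Inr e]) v \<le> Suc (vscore J v)" by (rule vscore_snoc_Inr_le_Suc)
    ultimately show ?thesis using IH Inr snoc.prems(3) unfolding vscore_def by auto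
  qed
qed simp

definition exposed :: "'a set \<Rightarrow> 'a set set \<Rightarrow> 'a hist \<Rightarrow> 'a set" where
  "exposed V E h = {u \<in> V - MV h. \<exists>e \<in> ME h. u \<in> e \<and> e \<notin> E}"

lemma exposed_snoc_Inl: "exposed V E (h @ [Inl x]) = exposed V E h - {x}"
  unfolding exposed_def by auto

lemma exposed_snoc_Inr_in: "e \<in> E \<Longrightarrow> exposed V E (h @ [Inr e]) = exposed V E h"
  unfolding exposed_def by auto

text \<open>If Alice has already marked \<open>\<sigma> I\<close> while covering an exposed vertex, she plays elsewhere,
  but the shadow game still records the move \<open>\<sigma> I\<close>.\<close>

definition alice_lift :: "'a set \<Rightarrow> 'a set set \<Rightarrow> 'a set \<Rightarrow> ('a hist \<Rightarrow> 'a) \<Rightarrow> 'a hist \<Rightarrow> 'a" where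
  "alice_lift V E V' \<sigma> h = (let I = sim V E (\<lambda>I _. \<sigma> I) h in
     if even (length I) \<and> V - MV I \<noteq> {} \<and> \<sigma> I \<notin> MV h then \<sigma> I
     else if exposed V E h \<noteq> {} then SOME u. u \<in> exposed V E h
     else SOME v. v \<in> V' - MV h)"

locale alice_lifting =
  fixes V V' :: "'a set" and E E' :: "'a set set" and \<sigma> :: "'a hist \<Rightarrow> 'a" and k :: nat
  assumes graph: "graph V' E'" and induced: "induced_subgraph V E V' E'"
    and degree_le: "\<And>v. v \<in> V' - V \<Longrightarrow> degree E' v \<le> enat k"
    and alice: "alice_strategy V \<sigma>"
    and avoids_k: "\<And>\<tau> t. bob_strategy E \<tau> \<Longrightarrow> odd (length (play V E \<sigma> \<tau> t)) \<Longrightarrow>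
      avoids V k (play V E \<sigma> \<tau> t)"
begin

abbreviation shadow :: "'a hist \<Rightarrow> 'a hist" where
  "shadow \<equiv> sim V E (\<lambda>I _. \<sigma> I)"

abbreviation \<sigma>' :: "'a hist \<Rightarrow> 'a" where
  "\<sigma>' \<equiv> alice_lift V E V' \<sigma>"

lemma V_subset: "V \<subseteq> V'" and E_eq: "E = {e \<in> E'. e \<subseteq> V}"
  using induced by (auto simp: induced_subgraph_def)

lemma alice_lift_strategy: "alice_strategy V' \<sigma>'"
  unfolding alice_strategy_def
proof (intro allI impI)
  fix h assume unmarked: "V' - MV h \<noteq> {}"
  define I where "I = shadow h"
  consider (follow) "even (length I) \<and> V - MV I \<noteq> {} \<and> \<sigma> I \<notin> MV h"
    | (repair) "\<not> (even (length I) \<and> V - MV I \<noteq> {} \<and> \<sigma> I \<notin> MV h)" "exposed V E h \<noteq> {}"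
    | (other) "\<not> (even (length I) \<and> V - MV I \<noteq> {} \<and> \<sigma> I \<notin> MV h)" "exposed V E h = {}"
    by blast
  then show "\<sigma>' h \<in> V' - MV h"
  proof cases
    case follow
    then have "\<sigma> I \<in> V" using alice unfolding alice_strategy_def by blast
    then show ?thesis using follow V_subset unfolding alice_lift_def I_def[symmetric] Let_def by auto
  next
    case repair
    then have "\<sigma>' h = (SOME u. u \<in> exposed V E h)"
      unfolding alice_lift_def I_def[symmetric] Let_def by auto
    then have "\<sigma>' h \<in> exposed V E h" using repair by (metis some_in_eq)
    then show ?thesis using V_subset unfolding exposed_def by auto
  next
    case other
    then have "\<sigma>' h = (SOME v. v \<in> V' - MV h)"
      unfolding alice_lift_def I_def[symmetric] Let_def by auto
    then show ?thesis using unmarked by (metis some_in_eq)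
  qed
qed

lemma exposed_snoc_Inr:
  assumes "e \<in> E'"
  shows "\<exists>a. exposed V E (h @ [Inr e]) \<subseteq> insert a (exposed V E h)"
proof (cases "e \<in> E")
  case False
  obtain a b where ab: "e = {a, b}" "a \<in> V'" "b \<in> V'"
    using graph assms unfolding graph_def by blast
  with False E_eq assms have "a \<notin> V \<or> b \<notin> V" by auto
  then show ?thesis
  proof
    assume "a \<notin> V"
    then have "exposed V E (h @ [Inr e]) \<subseteq> insert b (exposed V E h)"
      using ab unfolding exposed_def by auto
    then show ?thesis ..
  next
    assume "b \<notin> V"
    then have "exposed V E (h @ [Inr e]) \<subseteq> insert a (exposed V E h)"
      using ab unfolding exposed_def by auto
    then show ?thesis ..
  qed
qed (auto simp: exposed_snoc_Inr_in)

definition tracks :: "'a hist \<Rightarrow> 'a hist \<Rightarrow> bool" where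
  "tracks h I \<longleftrightarrow> legal V E I \<and> alice_follows \<sigma> I \<and> MV I \<subseteq> MV h
     \<and> (V - MV I \<noteq> {} \<longrightarrow> ME I = ME h \<inter> E)
     \<and> (odd (length h) \<longrightarrow> (odd (length I) \<or> V \<subseteq> MV I) \<and> exposed V E h = {})
     \<and> (even (length h) \<longrightarrow> (\<exists>a. exposed V E h \<subseteq> {a}) \<and> (exposed V E h \<noteq> {} \<longrightarrow> odd (length I)))"

lemma tracks_Nil: "tracks [] []"
  unfolding tracks_def exposed_def alice_follows_def by (auto intro: legal_Nil)

lemma tracks_snoc_Inl:
  assumes tracks: "tracks h I" and I: "I = shadow h" and even: "even (length h)"
  shows "tracks (h @ [Inl (\<sigma>' h)]) (sim_step V E (\<lambda>I _. \<sigma> I) I (Inl (\<sigma>' h)))"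
proof -
  from tracks even have legal: "legal V E I" and follows: "alice_follows \<sigma> I"
    and marked: "MV I \<subseteq> MV h" "V - MV I \<noteq> {} \<longrightarrow> ME I = ME h \<inter> E"
    and one_exposed: "\<exists>a. exposed V E h \<subseteq> {a}" "exposed V E h \<noteq> {} \<longrightarrow> odd (length I)"
    unfolding tracks_def by auto
  show ?thesis
  proof (cases "even (length I) \<and> V - MV I \<noteq> {}")
    case True
    then have step: "sim_step V E (\<lambda>I _. \<sigma> I) I (Inl (\<sigma>' h)) = I @ [Inl (\<sigma> I)]"
      unfolding sim_step_def by simp
    have "\<sigma> I \<in> V - MV I" using alice True unfolding alice_strategy_def by blast
    moreover have "\<sigma> I \<in> MV h \<or> \<sigma>' h = \<sigma> I"
      unfolding alice_lift_def I[symmetric] Let_def using True by auto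
    moreover have "exposed V E h = {}" using one_exposed True by auto
    ultimately show ?thesis
      unfolding step tracks_def using legal follows marked True even
      by (auto simp: legal_snoc_iff alice_follows_snoc_iff exposed_snoc_Inl)
  next
    case False
    then have step: "sim_step V E (\<lambda>I _. \<sigma> I) I (Inl (\<sigma>' h)) = I"
      unfolding sim_step_def by auto
    have "exposed V E (h @ [Inl (\<sigma>' h)]) = {}"
    proof (cases "exposed V E h = {}")
      case False
      then have "\<sigma>' h = (SOME u. u \<in> exposed V E h)"
        using one_exposed unfolding alice_lift_def I[symmetric] Let_def by auto
      then have "\<sigma>' h \<in> exposed V E h" using False by (metis some_in_eq)
      then show ?thesis using one_exposed by (auto simp: exposed_snoc_Inl)
    qed (simp add: exposed_snoc_Inl)
    then show ?thesis
      unfolding step tracks_def using legal follows marked False even by auto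
  qed
qed

lemma tracks_snoc_Inr:
  assumes tracks: "tracks h I" and odd: "odd (length h)" and e: "e \<in> E' - ME h"
  shows "tracks (h @ [Inr e]) (sim_step V E (\<lambda>I _. \<sigma> I) I (Inr e))"
proof -
  from tracks odd have legal: "legal V E I" and follows: "alice_follows \<sigma> I"
    and marked: "MV I \<subseteq> MV h" "V - MV I \<noteq> {} \<longrightarrow> ME I = ME h \<inter> E"
    and waiting: "odd (length I) \<or> V \<subseteq> MV I" and none_exposed: "exposed V E h = {}"
    unfolding tracks_def by auto
  obtain a where one_exposed: "exposed V E (h @ [Inr e]) \<subseteq> {a}"
    using exposed_snoc_Inr[of e h] e none_exposed by auto
  show ?thesis
  proof (cases "odd (length I) \<and> e \<in> E - ME I")
    case True
    then have "sim_step V E (\<lambda>I _. \<sigma> I) I (Inr e) = I @ [Inr e]"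
      unfolding sim_step_def by simp
    moreover have "exposed V E (h @ [Inr e]) = {}"
      using True none_exposed by (simp add: exposed_snoc_Inr_in)
    ultimately show ?thesis
      unfolding tracks_def using legal follows marked True odd
      by (auto simp: legal_snoc_iff alice_follows_snoc_iff)
  next
    case False
    then have step: "sim_step V E (\<lambda>I _. \<sigma> I) I (Inr e) = I"
      unfolding sim_step_def by auto
    have "ME I = ME (h @ [Inr e]) \<inter> E" if "V - MV I \<noteq> {}"
      using that waiting False marked e by auto
    moreover have "odd (length I)" if "exposed V E (h @ [Inr e]) \<noteq> {}"
      using that waiting marked unfolding exposed_def by auto
    ultimately show ?thesis
      unfolding step tracks_def using legal follows marked one_exposed odd by auto
  qed
qed

context
  fixes \<tau>' :: "'a hist \<Rightarrow> 'a set"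
  assumes bob': "bob_strategy E' \<tau>'"
begin

abbreviation real_play :: "nat \<Rightarrow> 'a hist" where
  "real_play t \<equiv> play V' E' \<sigma>' \<tau>' t"

abbreviation shadow_play :: "nat \<Rightarrow> 'a hist" where
  "shadow_play t \<equiv> shadow (real_play t)"

lemma tracks_play: "tracks (real_play t) (shadow_play t)"
proof (induction t)
  case 0
  then show ?case by (simp add: tracks_Nil)
next
  case (Suc t)
  consider "real_play (Suc t) = real_play t"
    | "even (length (real_play t))" "real_play (Suc t) = real_play t @ [Inl (\<sigma>' (real_play t))]"
    | "odd (length (real_play t))" "real_play (Suc t) = real_play t @ [Inr (\<tau>' (real_play t))]"
      "\<tau>' (real_play t) \<in> E' - ME (real_play t)"
    using play_Suc_cases[of V' E' \<sigma>' \<tau>' t] bob' unfolding bob_strategy_def ended_def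
    by (auto split: if_splits)
  then show ?case
    by cases (use Suc.IH tracks_snoc_Inl tracks_snoc_Inr in auto)
qed

lemma avoids_shadow_prefix:
  assumes "prefix K (shadow_play t)" and "odd (length K)"
  shows "avoids V k K"
proof -
  have chain: "\<And>t. prefix (shadow_play t) (shadow_play (Suc t))" by (rule prefix_sim_play_Suc)
  have legal: "\<And>t. legal V E (shadow_play t)" and follows: "\<And>t. alice_follows \<sigma> (shadow_play t)"
    using tracks_play unfolding tracks_def by auto
  obtain \<tau> where bob: "bob_strategy E \<tau>" and bob_follows: "\<And>t. bob_follows \<tau> (shadow_play t)"
    using chain_bob_strategy[of shadow_play, OF chain legal] by blast
  have "play V E \<sigma> \<tau> (length K) = K"
    using legal_prefix[OF legal assms(1)] alice_follows_prefix[OF follows assms(1)]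
      bob_follows_prefix[OF bob_follows assms(1)] by (rule play_eq_history)
  then show ?thesis using avoids_k[OF bob, of "length K"] assms(2) by simp
qed

lemma card_marked_inside:
  assumes "odd (length (real_play t))" and v: "v \<in> V - MV (real_play t)"
  shows "card {e \<in> ME (real_play t). v \<in> e} < k"
proof -
  from tracks_play[of t] assms(1) have marked: "MV (shadow_play t) \<subseteq> MV (real_play t)"
      "V - MV (shadow_play t) \<noteq> {} \<longrightarrow> ME (shadow_play t) = ME (real_play t) \<inter> E"
    and waiting: "odd (length (shadow_play t)) \<or> V \<subseteq> MV (shadow_play t)"
    and none_exposed: "exposed V E (real_play t) = {}"
    unfolding tracks_def by auto
  have v_shadow: "v \<in> V - MV (shadow_play t)" using v marked by auto
  then have "odd (length (shadow_play t))" using waiting by auto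
  moreover have "{e \<in> ME (real_play t). v \<in> e} = {e \<in> ME (shadow_play t). v \<in> e}"
    using none_exposed v marked v_shadow unfolding exposed_def by auto
  moreover have "if odd (length (shadow_play t)) then card {e \<in> ME (shadow_play t). v \<in> e} < k
      else card {e \<in> ME (shadow_play t). v \<in> e} \<le> k"
    using tracks_play[of t] avoids_shadow_prefix v_shadow unfolding tracks_def
    by (intro card_marked_if_avoids) auto
  ultimately show ?thesis by simp
qed

lemma card_marked_outside:
  assumes "v \<in> V' - V"
  shows "card {e \<in> ME (real_play t). v \<in> e} \<le> k"
proof -
  have "degree E' v \<le> enat k" using degree_le assms by blast
  then have "finite {e \<in> E'. v \<in> e}" and "card {e \<in> E'. v \<in> e} \<le> k"
    unfolding degree_def by (auto split: if_splits)
  moreover have "{e \<in> ME (real_play t). v \<in> e} \<subseteq> {e \<in> E'. v \<in> e}"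
    using ME_play_subset[OF bob'] by blast
  ultimately show ?thesis by (meson card_mono order_trans)
qed

lemma vscore_real_play_le: "v \<in> V' \<Longrightarrow> vscore (real_play t) v \<le> k"
proof (induction t)
  case (Suc t)
  consider "real_play (Suc t) = real_play t"
    | x where "real_play (Suc t) = real_play t @ [Inl x]"
    | e where "odd (length (real_play t))" "real_play (Suc t) = real_play t @ [Inr e]"
    using play_Suc_cases[of V' E' \<sigma>' \<tau>' t] by (auto split: if_splits)
  then show ?case
  proof cases
    case (2 x)
    then show ?thesis using Suc vscore_snoc_Inl_le[of "real_play t" x v] by simp
  next
    case (3 e)
    show ?thesis
    proof (cases "v \<in> V - MV (real_play t)")
      case True
      then have "vscore (real_play t) v < k"
        using card_marked_inside 3 unfolding vscore_def by auto
      then show ?thesis using 3 vscore_snoc_Inr_le_Suc[of "real_play t" e v] by simp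
    next
      case False
      then show ?thesis
        using card_marked_outside[of v "Suc t"] Suc.prems 3 unfolding vscore_def by auto
    qed
  qed (use Suc in simp)
qed (simp add: vscore_def)

lemma final_score_alice_lift: "final_score V' E' \<sigma>' \<tau>' \<le> enat k"
  using vscore_real_play_le V_subset by (intro final_score_le) blast

end

end

lemma not_bob_wins_Suc_if_alice_avoids:
  assumes "graph V' E'" "induced_subgraph V E V' E'"
    and "\<And>v. v \<in> V' - V \<Longrightarrow> degree E' v \<le> enat k" and "alice_avoids V E k"
  shows "\<not> bob_wins V' E' (Suc k)"
proof
  assume "bob_wins V' E' (Suc k)"
  then obtain \<tau>' where bob': "bob_strategy E' \<tau>'"
    and wins: "\<And>\<sigma>'. alice_strategy V' \<sigma>' \<Longrightarrow> enat (Suc k) \<le> final_score V' E' \<sigma>' \<tau>'"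
    unfolding bob_wins_def by blast
  obtain \<sigma> where "alice_strategy V \<sigma>"
    and "\<And>\<tau> t. bob_strategy E \<tau> \<Longrightarrow> odd (length (play V E \<sigma> \<tau> t)) \<Longrightarrow> avoids V k (play V E \<sigma> \<tau> t)"
    using assms(4) unfolding alice_avoids_def avoids_def by blast
  then interpret alice_lifting V V' E E' \<sigma> k
    using assms(1-3) by unfold_locales
  have "enat (Suc k) \<le> enat k"
    using wins[OF alice_lift_strategy] final_score_alice_lift[OF bob'] by (rule order_trans)
  then show False by simp
qed

theorem theorem4p3:
  fixes V V' :: "'a set" and E E' :: "'a set set" and n :: nat
  assumes "graph V' E'"
    and "induced_subgraph V E V' E'"
    and "\<forall>v \<in> V' - V. degree E' v < enat n"
    and "col_ve V E = enat n"
    and "alice_avoids V E (n - 1)"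
  shows "col_ve V' E' = enat n"
proof -
  have "0 < n" and wins: "bob_wins V E (n - 1)"
    using assms(4) col_ve_eq_enat_iff by blast+
  then obtain k where n: "n = Suc k" using gr0_implies_Suc by blast
  have "V \<subseteq> V'" "E \<subseteq> E'" using assms(2) unfolding induced_subgraph_def by auto
  then have "bob_wins V' E' k" using bob_wins_supergraph wins n by simp
  moreover have "degree E' v \<le> enat k" if "v \<in> V' - V" for v
  proof -
    have "degree E' v < enat (Suc k)" using assms(3) that n by blast
    then show ?thesis by (cases "degree E' v") auto
  qed
  then have "\<not> bob_wins V' E' (Suc k)"
    using assms(5) n by (intro not_bob_wins_Suc_if_alice_avoids[OF assms(1,2)]) simp_all
  ultimately show ?thesis unfolding col_ve_eq_enat_iff n by simp
qed

end
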